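(* Let $(\omega,\rho)$ be a linear $\mathrm{SU}(3)$-structure on $\mathbb R^6$ and let $\alpha\in\Lambda^2(\mathbb R^6)^*$. Then \begin{enumerate} \item $\|\alpha\|^2+\big\|\tfrac12\omega^2\wedge\alpha\big\|^2=\|\alpha\wedge\omega\|^2\le 4\|\alpha\|^2$; \item $\|\alpha^3\|^2\le 6\|\alpha\|^6$, \end{enumerate} where $\|\cdot\|$ is the norm on forms induced by the scalar product defined by the $\mathrm{SU}(3)$-structure.
   Context: A linear $\mathrm{SU}(3)$-structure on $\mathbb R^6$ is a pair $(\omega,\rho)$, $\omega\in\Lambda^2(\mathbb R^6)^*$, $\rho\in\Lambda^3(\mathbb R^6)^*$, such that for some basis $\{e^1,\dots,e^6\}$ of $(\mathbb R^6)^*$ one has $\omega=e^{12}+e^{34}+e^{56}$ and $\rho=\mathrm{Re}\big((e^1+ie^2)\wedge(e^3+ie^4)\wedge(e^5+ie^6)\big)$; the induced scalar product is the one making this basis orthonormal, extended to forms so that the $e^{i_1\cdots i_k}$ ($i_1<\dots<i_k$) are orthonormal. *)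

theory Defs
  imports Complex_Main
begin

text \<open>Exterior forms on R^6, in coordinates with respect to the standard dual basis
  dx_0,...,dx_5 of (R^6)^*.  A form is a coefficient function on index sets:
  beta = sum over I subset {0..5} of (beta I) dx^I, where dx^I = dx_{i1} wedge ... wedge dx_{ik}
  for I = {i1 < ... < ik}.\<close>

type_synonym 'a form = "nat set \<Rightarrow> 'a"

definition inv_count :: "nat set \<Rightarrow> nat set \<Rightarrow> nat" where
  "inv_count A B = card {(i, j). i \<in> A \<and> j \<in> B \<and> j < i}"

text \<open>Wedge product: dx^A wedge dx^B = (-1)^(inversions) dx^(A union B) for disjoint A, B.\<close>
definition wedge :: "'a::comm_ring_1 form \<Rightarrow> 'a form \<Rightarrow> 'a form" where
  "wedge a b = (\<lambda>S. if S \<subseteq> {..<6}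
      then (\<Sum>A\<in>Pow S. (-1) ^ inv_count A (S - A) * a A * b (S - A)) else 0)"

definition form_add :: "'a::comm_ring_1 form \<Rightarrow> 'a form \<Rightarrow> 'a form" where
  "form_add a b = (\<lambda>S. a S + b S)"

definition form_smult :: "'a::comm_ring_1 \<Rightarrow> 'a form \<Rightarrow> 'a form" where
  "form_smult c a = (\<lambda>S. c * a S)"

definition unit_form :: "'a::comm_ring_1 form" where
  "unit_form = (\<lambda>S. if S = {} then 1 else 0)"

definition is_k_form :: "nat \<Rightarrow> 'a::comm_ring_1 form \<Rightarrow> bool" where
  "is_k_form k b \<longleftrightarrow> (\<forall>S. b S \<noteq> 0 \<longrightarrow> S \<subseteq> {..<6} \<and> card S = k)"

definition is_dual_basis :: "(nat \<Rightarrow> real form) \<Rightarrow> bool" where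
  "is_dual_basis e \<longleftrightarrow> (\<forall>i<6. is_k_form 1 (e i)) \<and>
     (\<forall>a::nat \<Rightarrow> real. (\<forall>S. (\<Sum>i<6. a i * e i S) = 0) \<longrightarrow> (\<forall>i<6. a i = 0))"

definition elem_form :: "(nat \<Rightarrow> real form) \<Rightarrow> nat set \<Rightarrow> real form" where
  "elem_form e I = foldr (\<lambda>i acc. wedge (e i) acc) (sorted_list_of_set I) unit_form"

definition expand :: "(nat \<Rightarrow> real form) \<Rightarrow> real form \<Rightarrow> real form" where
  "expand e c = (\<lambda>S. \<Sum>I\<in>Pow {..<6}. c I * elem_form e I S)"

definition coords :: "(nat \<Rightarrow> real form) \<Rightarrow> real form \<Rightarrow> real form" where
  "coords e b = (THE c. (\<forall>S. \<not> S \<subseteq> {..<6} \<longrightarrow> c S = 0) \<and> expand e c = b)"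

text \<open>Norm induced by the scalar product making the e^I orthonormal.\<close>
definition form_norm :: "(nat \<Rightarrow> real form) \<Rightarrow> real form \<Rightarrow> real" where
  "form_norm e b = sqrt (\<Sum>I\<in>Pow {..<6}. (coords e b I) ^ 2)"

definition to_complex :: "real form \<Rightarrow> complex form" where
  "to_complex a = (\<lambda>S. complex_of_real (a S))"

text \<open>e is an adapted basis for (omega, rho): omega = e^12+e^34+e^56 and
  rho = Re((e^1+ie^2) wedge (e^3+ie^4) wedge (e^5+ie^6)) (indices shifted to 0..5).\<close>
definition su3_adapted :: "(nat \<Rightarrow> real form) \<Rightarrow> real form \<Rightarrow> real form \<Rightarrow> bool" where
  "su3_adapted e \<omega> \<rho> \<longleftrightarrow> is_dual_basis e \<and>
     \<omega> = form_add (form_add (wedge (e 0) (e 1)) (wedge (e 2) (e 3))) (wedge (e 4) (e 5)) \<and>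
     (let \<theta> = (\<lambda>j k. form_add (to_complex (e j)) (form_smult \<i> (to_complex (e k))))
      in \<rho> = (\<lambda>S. Re (wedge (wedge (\<theta> 0 1) (\<theta> 2 3)) (\<theta> 4 5) S)))"

definition linear_su3_structure :: "real form \<Rightarrow> real form \<Rightarrow> bool" where
  "linear_su3_structure \<omega> \<rho> \<longleftrightarrow> (\<exists>e. su3_adapted e \<omega> \<rho>)"

end

theory Submission
  imports Defs "Jordan_Normal_Form.Determinant"
begin

text \<open>Taking coefficients with respect to the products \<open>e\<^sup>I\<close> of an adapted coframe is an
  isomorphism of exterior algebras onto the standard one, so all norms in question are Euclidean
  norms of coefficient vectors, computed with \<open>\<omega> = dx\<^sup>0\<^sup>1 + dx\<^sup>2\<^sup>3 + dx\<^sup>4\<^sup>5\<close>.  With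
  \<open>t = a\<^sub>0\<^sub>1 + a\<^sub>2\<^sub>3 + a\<^sub>4\<^sub>5\<close>, the form \<open>\<omega>\<^sup>2 \<and> \<alpha> / 2\<close> is \<open>t vol\<close>, while \<open>\<alpha> \<and> \<omega>\<close> has the
  coefficients \<open>a\<^sub>0\<^sub>1 + a\<^sub>2\<^sub>3\<close>, \<open>a\<^sub>0\<^sub>1 + a\<^sub>4\<^sub>5\<close>, \<open>a\<^sub>2\<^sub>3 + a\<^sub>4\<^sub>5\<close> and the twelve remaining \<open>a\<^sub>i\<^sub>j\<close>; this
  gives the identity, and \<open>t\<^sup>2 \<le> 3 \<parallel>\<alpha>\<parallel>\<^sup>2\<close> the first inequality.  Finally \<open>\<alpha>\<^sup>3 = 6 Pf(a) vol\<close>,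
  and expanding the Pfaffian along its first row bounds it by the norm of \<open>\<alpha>\<close>.\<close>

section \<open>Inversion counts\<close>

lemma finite_inversions:
  "finite A \<Longrightarrow> finite B \<Longrightarrow> finite {(i, j). i \<in> A \<and> j \<in> B \<and> j < i}"
  by (rule finite_subset[of _ "A \<times> B"]) auto

lemma inv_count_Un_left:
  assumes "finite A" "finite A'" "finite B" "A \<inter> A' = {}"
  shows "inv_count (A \<union> A') B = inv_count A B + inv_count A' B"
proof -
  have "{(i, j). i \<in> A \<union> A' \<and> j \<in> B \<and> j < i}
      = {(i, j). i \<in> A \<and> j \<in> B \<and> j < i} \<union> {(i, j). i \<in> A' \<and> j \<in> B \<and> j < i}"
    by auto
  then show ?thesis
    unfolding inv_count_def using assms by (simp add: card_Un_disjoint finite_inversions disjoint_iff)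
qed

lemma inv_count_Un_right:
  assumes "finite A" "finite B" "finite B'" "B \<inter> B' = {}"
  shows "inv_count A (B \<union> B') = inv_count A B + inv_count A B'"
proof -
  have "{(i, j). i \<in> A \<and> j \<in> B \<union> B' \<and> j < i}
      = {(i, j). i \<in> A \<and> j \<in> B \<and> j < i} \<union> {(i, j). i \<in> A \<and> j \<in> B' \<and> j < i}"
    by auto
  then show ?thesis
    unfolding inv_count_def using assms by (simp add: card_Un_disjoint finite_inversions disjoint_iff)
qed

lemma inv_count_swap:
  assumes "finite A" "finite B" "A \<inter> B = {}"
  shows "inv_count A B + inv_count B A = card A * card B"
proof -
  let ?gt = "{(i, j). i \<in> A \<and> j \<in> B \<and> j < i}" and ?lt = "{(i, j). i \<in> A \<and> j \<in> B \<and> i < j}"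
  have "inv_count B A = card ?lt"
    unfolding inv_count_def
    by (rule bij_betw_same_card[of "\<lambda>(x, y). (y, x)"]) (auto simp: bij_betw_def inj_on_def image_def)
  moreover have "A \<times> B = ?gt \<union> ?lt"
    using assms by auto
  moreover have "card (?gt \<union> ?lt) = card ?gt + card ?lt"
    using assms by (intro card_Un_disjoint) (auto intro: finite_subset[of _ "A \<times> B"])
  ultimately show ?thesis
    by (simp add: inv_count_def card_cartesian_product[symmetric])
qed

lemma inv_count_singleton_left: "inv_count {k} B = card (B \<inter> {..<k})"
  unfolding inv_count_def
  by (rule bij_betw_same_card[of snd]) (auto simp: bij_betw_def inj_on_def image_def)

lemma inv_count_eq_sum: "finite A \<Longrightarrow> finite B \<Longrightarrow> inv_count A B = (\<Sum>i\<in>A. card (B \<inter> {..<i}))"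
proof (induction A rule: finite_induct)
  case empty
  then show ?case by (simp add: inv_count_def)
next
  case (insert x A)
  then show ?case
    using inv_count_Un_left[of "{x}" A B] by (simp add: inv_count_singleton_left)
qed

lemma sum_Pow_reindex_Un:
  assumes "finite S"
  shows "(\<Sum>p\<in>(SIGMA A:Pow S. Pow A). g p) = (\<Sum>(B, C)\<in>(SIGMA B:Pow S. Pow (S - B)). g (B \<union> C, B))"
  by (rule sum.reindex_bij_witness[where i="\<lambda>(B, C). (B \<union> C, B)" and j="\<lambda>(A, B). (B, A - B)"])
    (auto simp: Un_absorb1 Un_absorb2)

section \<open>The wedge product\<close>

lemma wedge_assoc: "wedge (wedge a b) c = wedge a (wedge b (c :: 'a::comm_ring_1 form))"
proof
  fix S
  show "wedge (wedge a b) c S = wedge a (wedge b c) S"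
  proof (cases "S \<subseteq> {..<6}")
    case False
    then show ?thesis by (simp add: wedge_def)
  next
    case True
    have fS: "finite S" using True finite_subset by blast
    define g where "g = (\<lambda>(A, B). (-1::'a) ^ (inv_count B (A - B) + inv_count A (S - A))
                                    * a B * b (A - B) * c (S - A))"
    define h where "h = (\<lambda>(B, C). (-1::'a) ^ (inv_count B (S - B) + inv_count C (S - B - C))
                                    * a B * b C * c (S - B - C))"
    have "wedge (wedge a b) c S = (\<Sum>A\<in>Pow S. \<Sum>B\<in>Pow A. g (A, B))"
      unfolding wedge_def g_def using True
      by (auto simp: sum_distrib_left sum_distrib_right power_add mult.assoc mult.left_commute
          intro!: sum.cong)
    also have "\<dots> = sum g (SIGMA A:Pow S. Pow A)"
      using fS by (subst sum.Sigma) (auto intro: finite_subset)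
    also have "\<dots> = (\<Sum>(B, C)\<in>(SIGMA B:Pow S. Pow (S - B)). g (B \<union> C, B))"
      by (rule sum_Pow_reindex_Un[OF fS])
    also have "\<dots> = sum h (SIGMA B:Pow S. Pow (S - B))"
    proof (rule sum.cong[OF refl], clarify)
      fix B C assume BC: "B \<subseteq> S" "C \<subseteq> S - B"
      have fin: "finite B" "finite C" "finite (S - B - C)" using BC fS finite_subset by blast+
      have "S - B = C \<union> (S - B - C)" using BC by auto
      then have "inv_count B (S - B) = inv_count B C + inv_count B (S - B - C)"
        using fin inv_count_Un_right[of B C "S - B - C"] by auto
      moreover have "inv_count (B \<union> C) (S - B - C) = inv_count B (S - B - C) + inv_count C (S - B - C)"
        using fin BC by (intro inv_count_Un_left) auto
      moreover have "B \<union> C - B = C" "S - (B \<union> C) = S - B - C" using BC by auto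
      ultimately show "g (B \<union> C, B) = h (B, C)"
        unfolding g_def h_def by (simp add: ac_simps)
    qed
    also have "\<dots> = (\<Sum>B\<in>Pow S. \<Sum>C\<in>Pow (S - B). h (B, C))"
      using fS by (subst sum.Sigma) (auto intro: finite_subset)
    also have "\<dots> = wedge a (wedge b c) S"
      unfolding wedge_def h_def using True
      by (auto simp: sum_distrib_left sum_distrib_right power_add mult.assoc mult.left_commute
          intro!: sum.cong)
    finally show ?thesis .
  qed
qed

lemma wedge_add_left: "wedge (form_add a a') b = form_add (wedge a b) (wedge a' (b::'a::comm_ring_1 form))"
  unfolding wedge_def form_add_def by (auto simp: sum.distrib algebra_simps)

lemma wedge_add_right: "wedge a (form_add b b') = form_add (wedge a b) (wedge a (b'::'a::comm_ring_1 form))"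
  unfolding wedge_def form_add_def by (auto simp: sum.distrib algebra_simps)

lemma wedge_smult_left: "wedge (form_smult c a) b = form_smult c (wedge a (b::'a::comm_ring_1 form))"
  unfolding wedge_def form_smult_def by (auto simp: sum_distrib_left mult_ac)

lemma wedge_smult_right: "wedge a (form_smult c b) = form_smult c (wedge a (b::'a::comm_ring_1 form))"
  unfolding wedge_def form_smult_def by (auto simp: sum_distrib_left mult_ac)

lemma wedge_sum_left:
  "finite F \<Longrightarrow> wedge (\<lambda>T. \<Sum>i\<in>F. f i T) b S = (\<Sum>i\<in>F. wedge (f i) (b::'a::comm_ring_1 form) S)"
  unfolding wedge_def by (auto simp: sum_distrib_left sum_distrib_right mult_ac intro: sum.swap)

lemma wedge_sum_right:
  "finite F \<Longrightarrow> wedge b (\<lambda>T. \<Sum>i\<in>F. f i T) S = (\<Sum>i\<in>F. wedge (b::'a::comm_ring_1 form) (f i) S)"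
  unfolding wedge_def by (auto simp: sum_distrib_left sum_distrib_right mult_ac intro: sum.swap)

lemma wedge_zero_left [simp]: "wedge (\<lambda>_. 0) b = (\<lambda>_. 0::'a::comm_ring_1)"
  unfolding wedge_def by auto

lemma wedge_zero_right [simp]: "wedge b (\<lambda>_. 0) = (\<lambda>_. 0::'a::comm_ring_1)"
  unfolding wedge_def by auto

lemma form_smult_one [simp]: "form_smult 1 a = (a::'a::comm_ring_1 form)"
  by (simp add: form_smult_def)

lemma form_smult_smult [simp]: "form_smult c (form_smult d a) = form_smult (c * d) (a::'a::comm_ring_1 form)"
  by (simp add: form_smult_def mult.assoc)

lemma form_smult_zero_form [simp]: "form_smult c (\<lambda>_. 0) = (\<lambda>_. 0::'a::comm_ring_1)"
  by (simp add: form_smult_def)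

lemma is_k_form_subset: "is_k_form k a \<Longrightarrow> a S \<noteq> 0 \<Longrightarrow> S \<subseteq> {..<6}"
  unfolding is_k_form_def by auto

lemma is_k_form_eq_0: "is_k_form k a \<Longrightarrow> card S \<noteq> k \<Longrightarrow> a S = 0"
  unfolding is_k_form_def by auto

lemma wedge_unit_left: "S \<subseteq> {..<6} \<Longrightarrow> wedge unit_form a S = (a S :: 'a::comm_ring_1)"
  unfolding wedge_def
  by (subst sum.remove[of _ "{}"]) (auto simp: unit_form_def finite_subset inv_count_def intro!: sum.neutral)

lemma wedge_unit_right: "S \<subseteq> {..<6} \<Longrightarrow> wedge a unit_form S = (a S :: 'a::comm_ring_1)"
proof -
  assume S: "S \<subseteq> {..<6}"
  have "(\<Sum>A\<in>Pow S - {S}. (-1) ^ inv_count A (S - A) * a A * unit_form (S - A)) = (0::'a)"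
    by (rule sum.neutral) (auto simp: unit_form_def)
  moreover have "inv_count S {} = 0" by (simp add: inv_count_def)
  ultimately show ?thesis
    using S finite_subset by (subst wedge_def, subst sum.remove[of _ S]) (auto simp: unit_form_def)
qed

lemma wedge_unit_form_left: "is_k_form k a \<Longrightarrow> wedge unit_form a = (a::'a::comm_ring_1 form)"
  by (rule ext) (metis wedge_unit_left wedge_def is_k_form_subset)

lemma wedge_unit_form_right: "is_k_form k a \<Longrightarrow> wedge a unit_form = (a::'a::comm_ring_1 form)"
  by (rule ext) (metis wedge_unit_right wedge_def is_k_form_subset)

lemma is_k_form_wedge:
  assumes "is_k_form k a" "is_k_form l (b::'a::comm_ring_1 form)"
  shows "is_k_form (k + l) (wedge a b)"
  unfolding is_k_form_def
proof (intro allI impI)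
  fix S assume "wedge a b S \<noteq> 0"
  then have S: "S \<subseteq> {..<6}" and "(\<Sum>A\<in>Pow S. (-1) ^ inv_count A (S - A) * a A * b (S - A)) \<noteq> 0"
    unfolding wedge_def by (auto split: if_splits)
  then obtain A where A: "A \<subseteq> S" "a A \<noteq> 0" "b (S - A) \<noteq> 0"
    by (metis (no_types, lifting) PowD mult_zero_left mult_zero_right sum.neutral)
  then have "card A = k" "card (S - A) = l"
    using assms is_k_form_eq_0 by blast+
  moreover have "finite S" using S finite_subset by blast
  ultimately show "S \<subseteq> {..<6} \<and> card S = k + l"
    using A(1) S by (metis card_Diff_subset finite_subset card_mono le_add_diff_inverse)
qed

lemma wedge_commute:
  assumes a: "is_k_form k a" and b: "is_k_form l (b::'a::comm_ring_1 form)"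
  shows "wedge b a = form_smult ((-1) ^ (k * l)) (wedge a b)"
proof
  fix S
  show "wedge b a S = form_smult ((-1) ^ (k * l)) (wedge a b) S"
  proof (cases "S \<subseteq> {..<6}")
    case False
    then show ?thesis by (simp add: wedge_def form_smult_def)
  next
    case True
    have fS: "finite S" using True finite_subset by blast
    have "wedge b a S = (\<Sum>A\<in>Pow S. (-1) ^ inv_count A (S - A) * b A * a (S - A))"
      using True by (simp add: wedge_def)
    also have "\<dots> = (\<Sum>A\<in>Pow S. (-1) ^ inv_count (S - A) A * b (S - A) * a A)"
      by (rule sum.reindex_bij_witness[where i="\<lambda>A. S - A" and j="\<lambda>A. S - A"])
        (auto simp: Diff_Diff_Int Int_absorb1 Int_absorb2)
    also have "\<dots> = (\<Sum>A\<in>Pow S. (-1) ^ (k * l) * ((-1) ^ inv_count A (S - A) * a A * b (S - A)))"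
    proof (rule sum.cong[OF refl])
      fix A assume A: "A \<in> Pow S"
      show "(-1) ^ inv_count (S - A) A * b (S - A) * a A
          = (-1) ^ (k * l) * ((-1) ^ inv_count A (S - A) * a A * b (S - A))"
      proof (cases "a A = 0 \<or> b (S - A) = 0")
        case False
        then have "card A = k" "card (S - A) = l" using a b is_k_form_eq_0 by blast+
        moreover have "finite A" using A fS finite_subset by auto
        ultimately have "(-1::'a) ^ (k * l) = (-1) ^ inv_count A (S - A) * (-1) ^ inv_count (S - A) A"
          using inv_count_swap[of A "S - A"] fS by (metis Diff_disjoint finite_Diff power_add)
        moreover have "(-1::'a) ^ inv_count A (S - A) * (-1) ^ inv_count A (S - A) = 1"
          by (simp add: power_add[symmetric])
        ultimately show ?thesis
          by (metis (no_types, lifting) mult.assoc mult.commute mult.left_neutral)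
      qed auto
    qed
    also have "\<dots> = form_smult ((-1) ^ (k * l)) (wedge a b) S"
      unfolding wedge_def form_smult_def using True by (simp add: sum_distrib_left)
    finally show ?thesis .
  qed
qed

lemma wedge_one_forms_anticommute:
  "is_k_form 1 f \<Longrightarrow> is_k_form 1 g \<Longrightarrow> wedge g f = form_smult (-1) (wedge f (g::'a::comm_ring_1 form))"
  using wedge_commute[of 1 f 1 g] by simp

lemma wedge_one_form_self: "is_k_form 1 (f::real form) \<Longrightarrow> wedge f f = (\<lambda>_. 0)"
  using wedge_one_forms_anticommute[of f f] by (auto simp: form_smult_def fun_eq_iff)

section \<open>Products of a coframe\<close>

lemma elem_form_empty [simp]: "elem_form e {} = unit_form"
  by (simp add: elem_form_def)

lemma elem_form_insert_min:
  assumes "finite K" "\<forall>x\<in>K. k < x"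
  shows "elem_form e (insert k K) = wedge (e k) (elem_form e K)"
proof -
  have "Min (insert k K) = k" "insert k K - {k} = K"
    using assms by (auto intro!: Min_eqI)
  then show ?thesis
    unfolding elem_form_def using assms by (subst sorted_list_of_set_nonempty) auto
qed

lemma is_k_form_elem_form:
  assumes e: "\<forall>i<6. is_k_form 1 (e i)" and I: "I \<subseteq> {..<6}"
  shows "is_k_form (card I) (elem_form e I)"
proof -
  have "finite I" using I finite_subset by blast
  then show ?thesis using I
  proof (induction I rule: finite_linorder_min_induct)
    case empty
    then show ?case by (simp add: is_k_form_def unit_form_def)
  next
    case (insert b A)
    then have "is_k_form (1 + card A) (wedge (e b) (elem_form e A))"
      using e by (intro is_k_form_wedge) auto
    then show ?case
      using insert elem_form_insert_min[of A b e] by auto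
  qed
qed

lemma elem_form_singleton: "\<forall>i<6. is_k_form 1 (e i) \<Longrightarrow> m < 6 \<Longrightarrow> elem_form e {m} = e m"
  using elem_form_insert_min[of "{}" m e] wedge_unit_form_right[of 1 "e m"] by simp

lemma elem_form_pair: "\<forall>i<6. is_k_form 1 (e i) \<Longrightarrow> i < j \<Longrightarrow> j < 6 \<Longrightarrow> elem_form e {i, j} = wedge (e i) (e j)"
  using elem_form_insert_min[of "{j}" i e] elem_form_singleton[of e j] by simp

lemma wedge_basis_elem_form:
  assumes e: "\<forall>i<6. is_k_form 1 (e i)" and I: "I \<subseteq> {..<6}" and m: "m < 6"
  shows "wedge (e m) (elem_form e I)
       = (if m \<in> I then (\<lambda>_. 0) else form_smult ((-1) ^ card (I \<inter> {..<m})) (elem_form e (insert m I)))"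
proof -
  have "finite I" using I finite_subset by blast
  then show ?thesis using I
  proof (induction I rule: finite_linorder_min_induct)
    case empty
    then show ?case using elem_form_singleton[OF e m] elem_form_insert_min[of "{}" m e] by simp
  next
    case (insert k K)
    have k6: "k < 6" and K6: "K \<subseteq> {..<6}" and kK: "k \<notin> K" using insert by auto
    have insert_k: "elem_form e (insert k K) = wedge (e k) (elem_form e K)"
      using elem_form_insert_min insert by blast
    consider "m < k" | "m = k" | "k < m" by linarith
    then show ?case
    proof cases
      case 1
      then have "insert k K \<inter> {..<m} = {}" "m \<notin> insert k K" using insert by auto
      moreover have "elem_form e (insert m (insert k K)) = wedge (e m) (elem_form e (insert k K))"
        using 1 insert by (intro elem_form_insert_min) auto
      ultimately show ?thesis by simp
    next
      case 2
      then show ?thesis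
        using insert_k wedge_one_form_self[of "e m"] e m by (simp flip: wedge_assoc)
    next
      case 3
      have "wedge (e m) (elem_form e (insert k K)) = wedge (wedge (e m) (e k)) (elem_form e K)"
        by (simp add: insert_k wedge_assoc)
      also have "\<dots> = form_smult (-1) (wedge (e k) (wedge (e m) (elem_form e K)))"
        using wedge_one_forms_anticommute[of "e k" "e m"] e m k6
        by (simp add: wedge_smult_left wedge_assoc)
      finally have swap: "wedge (e m) (elem_form e (insert k K))
                        = form_smult (-1) (wedge (e k) (wedge (e m) (elem_form e K)))" .
      show ?thesis
      proof (cases "m \<in> K")
        case True
        then show ?thesis using swap insert.IH[OF K6] by simp
      next
        case False
        have "elem_form e (insert k (insert m K)) = wedge (e k) (elem_form e (insert m K))"
          using insert 3 by (intro elem_form_insert_min) auto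
        moreover have "insert k K \<inter> {..<m} = insert k (K \<inter> {..<m})" using 3 by auto
        moreover have "finite (K \<inter> {..<m})" using insert by auto
        moreover have "insert k (insert m K) = insert m (insert k K)" by auto
        ultimately show ?thesis
          using swap insert.IH[OF K6] False 3 kK by (simp add: wedge_smult_right)
      qed
    qed
  qed
qed

lemma wedge_elem_form:
  assumes e: "\<forall>i<6. is_k_form 1 (e i)" and I: "I \<subseteq> {..<6}" and J: "J \<subseteq> {..<6}"
  shows "wedge (elem_form e I) (elem_form e J)
       = (if I \<inter> J = {} then form_smult ((-1) ^ inv_count I J) (elem_form e (I \<union> J)) else (\<lambda>_. 0))"
proof -
  have fJ: "finite J" using J finite_subset by blast
  have "finite I" using I finite_subset by blast
  then show ?thesis using I
  proof (induction I rule: finite_linorder_min_induct)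
    case empty
    have "inv_count {} J = 0" by (simp add: inv_count_def)
    then show ?case
      using wedge_unit_form_left[OF is_k_form_elem_form[OF e J]] by simp
  next
    case (insert k K)
    have k6: "k < 6" and K6: "K \<subseteq> {..<6}" and kK: "k \<notin> K" using insert by auto
    have IH: "wedge (elem_form e (insert k K)) (elem_form e J)
        = (if K \<inter> J = {} then form_smult ((-1) ^ inv_count K J) (wedge (e k) (elem_form e (K \<union> J)))
           else (\<lambda>_. 0))"
      using elem_form_insert_min[of K k e] insert insert.IH[OF K6]
      by (simp add: wedge_assoc wedge_smult_right)
    show ?case
    proof (cases "K \<inter> J = {} \<and> k \<notin> J")
      case True
      have "inv_count (insert k K) J = card (J \<inter> {..<k}) + inv_count K J"
        using inv_count_Un_left[of "{k}" K J] insert fJ kK by (simp add: inv_count_singleton_left)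
      moreover have "(K \<union> J) \<inter> {..<k} = J \<inter> {..<k}" using insert by auto
      ultimately show ?thesis
        using IH True wedge_basis_elem_form[OF e _ k6, of "K \<union> J"] K6 J kK
        by (simp add: power_add mult.commute)
    qed (use IH wedge_basis_elem_form[OF e _ k6, of "K \<union> J"] K6 J in auto)
  qed
qed

section \<open>Coordinates with respect to a coframe\<close>

definition dx :: "nat set \<Rightarrow> real form" where
  "dx I = (\<lambda>S. if S = I then 1 else 0)"

lemma expand_dx: "I \<subseteq> {..<6} \<Longrightarrow> expand e (dx I) = elem_form e I"
proof
  fix S assume I: "I \<subseteq> {..<6}"
  have "expand e (dx I) S = (\<Sum>J\<in>Pow {..<6}. if J = I then elem_form e J S else 0)"
    unfolding expand_def dx_def by (rule sum.cong) auto
  then show "expand e (dx I) S = elem_form e I S"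
    using I by simp
qed

lemma expand_add: "expand e (form_add c d) = form_add (expand e c) (expand e d)"
  unfolding expand_def form_add_def by (rule ext) (simp add: algebra_simps sum.distrib)

lemma expand_smult: "expand e (form_smult r c) = form_smult r (expand e c)"
  unfolding expand_def form_smult_def by (rule ext) (simp add: sum_distrib_left mult.assoc)

lemma expand_sum: "finite F \<Longrightarrow> expand e (\<lambda>I. \<Sum>j\<in>F. f j I) S = (\<Sum>j\<in>F. expand e (f j) S)"
  unfolding expand_def by (simp add: sum_distrib_right sum.swap[of _ F])

lemma expand_wedge:
  assumes e: "\<forall>i<6. is_k_form 1 (e i)"
  shows "wedge (expand e c) (expand e d) = expand e (wedge c d)"
proof
  fix S
  let ?U = "{..<6::nat}"
  define G where "G = (\<lambda>(K, A). (-1) ^ inv_count A (K - A) * c A * d (K - A) * elem_form e K S)"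
  have "wedge (expand e c) (expand e d) S
      = (\<Sum>I\<in>Pow ?U. \<Sum>J\<in>Pow ?U. c I * d J * wedge (elem_form e I) (elem_form e J) S)"
    unfolding expand_def
    by (simp add: wedge_sum_left wedge_sum_right wedge_smult_left[unfolded form_smult_def]
        wedge_smult_right[unfolded form_smult_def] mult.assoc sum_distrib_left)
  also have "\<dots> = (\<Sum>I\<in>Pow ?U. \<Sum>J\<in>Pow (?U - I). c I * d J * ((-1) ^ inv_count I J * elem_form e (I \<union> J) S))"
  proof (rule sum.cong[OF refl])
    fix I assume I: "I \<in> Pow ?U"
    have "(\<Sum>J\<in>Pow ?U. c I * d J * wedge (elem_form e I) (elem_form e J) S)
        = (\<Sum>J\<in>Pow ?U. if I \<inter> J = {} then c I * d J * ((-1) ^ inv_count I J * elem_form e (I \<union> J) S) else 0)"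
      using I by (intro sum.cong) (simp_all add: wedge_elem_form[OF e] form_smult_def)
    also have "\<dots> = (\<Sum>J\<in>{J \<in> Pow ?U. I \<inter> J = {}}. c I * d J * ((-1) ^ inv_count I J * elem_form e (I \<union> J) S))"
      by (rule sum.inter_filter[symmetric]) simp
    also have "{J \<in> Pow ?U. I \<inter> J = {}} = Pow (?U - I)"
      by auto
    finally show "(\<Sum>J\<in>Pow ?U. c I * d J * wedge (elem_form e I) (elem_form e J) S)
        = (\<Sum>J\<in>Pow (?U - I). c I * d J * ((-1) ^ inv_count I J * elem_form e (I \<union> J) S))" .
  qed
  also have "\<dots> = (\<Sum>B\<in>Pow ?U. \<Sum>C\<in>Pow (?U - B). G (B \<union> C, B))"
  proof (intro sum.cong refl)
    fix B C assume "B \<in> Pow ?U" "C \<in> Pow (?U - B)"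
    then have "B \<union> C - B = C" by auto
    then show "c B * d C * ((-1) ^ inv_count B C * elem_form e (B \<union> C) S) = G (B \<union> C, B)"
      by (simp add: G_def mult_ac)
  qed
  also have "\<dots> = (\<Sum>(B, C)\<in>(SIGMA B:Pow ?U. Pow (?U - B)). G (B \<union> C, B))"
    by (subst sum.Sigma) auto
  also have "\<dots> = (\<Sum>p\<in>(SIGMA K:Pow ?U. Pow K). G p)"
    by (rule sum_Pow_reindex_Un[symmetric]) simp
  also have "\<dots> = expand e (wedge c d) S"
    unfolding expand_def wedge_def G_def
    by (subst sum.Sigma[symmetric]) (auto simp: sum_distrib_right intro!: sum.cong intro: finite_subset)
  finally show "wedge (expand e c) (expand e d) S = expand e (wedge c d) S" .
qed

lemma is_dual_basis_one_forms: "is_dual_basis e \<Longrightarrow> \<forall>i<6. is_k_form 1 (e i)"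
  unfolding is_dual_basis_def by blast

lemma dual_basis_inverse:
  assumes b: "is_dual_basis e"
  shows "\<exists>N. \<forall>k<6. \<forall>S. dx {k} S = (\<Sum>j<6. N j k * e j S)"
proof -
  define M where "M = mat 6 6 (\<lambda>(i, j). e j {i})"
  have Mc: "M \<in> carrier_mat 6 6" unfolding M_def by simp
  have singleton: "\<exists>i<6. S = {i}" if "j < 6" "e j S \<noteq> 0" for j S
  proof -
    have "S \<subseteq> {..<6}" "card S = 1"
      using that b unfolding is_dual_basis_def is_k_form_def by auto
    then show ?thesis by (auto simp: card_Suc_eq)
  qed
  have M_mult: "(M *\<^sub>v v) $ i = (\<Sum>j<6. v $ j * e j {i})" if "v \<in> carrier_vec 6" "i < 6" for v i
    using that unfolding M_def by (simp add: scalar_prod_def lessThan_atLeast0 mult.commute)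
  have "det M \<noteq> 0"
  proof
    assume "det M = 0"
    then obtain v where v: "v \<in> carrier_vec 6" "v \<noteq> 0\<^sub>v 6" "M *\<^sub>v v = 0\<^sub>v 6"
      using det_0_iff_vec_prod_zero_field[OF Mc] by blast
    have "(\<Sum>j<6. v $ j * e j S) = 0" for S
    proof (cases "\<exists>i<6. S = {i}")
      case True
      then show ?thesis using v M_mult by force
    next
      case False
      then have "\<forall>j<6. e j S = 0" using singleton by blast
      then show ?thesis by simp
    qed
    then have "\<forall>i<6. v $ i = 0"
      using b unfolding is_dual_basis_def by blast
    then show False
      using v(1,2) by (auto simp: vec_eq_iff)
  qed
  then obtain B where B: "B \<in> carrier_mat 6 6" "M * B = 1\<^sub>m 6"
    using det_non_zero_imp_unit[OF Mc, of "()"] unfolding Units_def ring_mat_def by auto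
  have "dx {k} S = (\<Sum>j<6. B $$ (j, k) * e j S)" if k: "k < 6" for k S
  proof (cases "\<exists>i<6. S = {i}")
    case True
    then obtain i where i: "i < 6" "S = {i}" by blast
    have "(M * B) $$ (i, k) = (\<Sum>j<6. B $$ (j, k) * e j S)"
      using B(1) i k unfolding M_def by (simp add: scalar_prod_def lessThan_atLeast0 mult.commute)
    then show ?thesis using B(2) i k by (auto simp: dx_def)
  next
    case False
    then have "\<forall>j<6. e j S = 0" using singleton by blast
    then show ?thesis using False k by (auto simp: dx_def)
  qed
  then show ?thesis by (intro exI[of _ "\<lambda>j k. B $$ (j, k)"]) blast
qed

lemma wedge_dx_insert_min:
  assumes kK: "\<forall>x\<in>K. k < x" and sub: "insert k K \<subseteq> {..<6}"
  shows "wedge (dx {k}) (dx K) = dx (insert k K)"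
proof
  fix S
  have kn: "k \<notin> K" using kK by auto
  show "wedge (dx {k}) (dx K) S = dx (insert k K) S"
  proof (cases "S \<subseteq> {..<6}")
    case False
    then show ?thesis using sub by (auto simp: wedge_def dx_def)
  next
    case True
    have "wedge (dx {k}) (dx K) S
        = (\<Sum>A\<in>Pow S. if A = {k} then (-1) ^ inv_count {k} (S - {k}) * dx K (S - {k}) else 0)"
      unfolding wedge_def using True by (auto simp: dx_def intro!: sum.cong)
    also have "\<dots> = (if k \<in> S then (-1) ^ inv_count {k} (S - {k}) * dx K (S - {k}) else 0)"
      using True by (simp add: finite_subset)
    also have "\<dots> = dx (insert k K) S"
    proof (cases "S = insert k K")
      case True
      then have "S - {k} = K" "inv_count {k} K = 0"
        using kn kK by (auto simp: inv_count_singleton_left)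
      then show ?thesis using True by (simp add: dx_def)
    qed (auto simp: dx_def)
    finally show ?thesis .
  qed
qed

lemma dx_in_range_expand:
  assumes b: "is_dual_basis e" and I: "I \<subseteq> {..<6}"
  shows "\<exists>c. dx I = expand e c"
proof -
  have e1: "\<forall>i<6. is_k_form 1 (e i)" using b by (rule is_dual_basis_one_forms)
  obtain N where N: "\<forall>k<6. \<forall>S. dx {k} S = (\<Sum>j<6. N j k * e j S)"
    using dual_basis_inverse[OF b] by blast
  have singleton: "dx {k} = expand e (\<lambda>I. \<Sum>j<6. N j k * dx {j} I)" if "k < 6" for k
  proof
    fix S
    have "expand e (\<lambda>I. \<Sum>j<6. N j k * dx {j} I) S = (\<Sum>j<6. N j k * expand e (dx {j}) S)"
      using expand_smult[unfolded form_smult_def] by (simp add: expand_sum fun_eq_iff)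
    also have "\<dots> = dx {k} S"
      using N that by (simp add: expand_dx elem_form_singleton[OF e1])
    finally show "dx {k} S = expand e (\<lambda>I. \<Sum>j<6. N j k * dx {j} I) S" by simp
  qed
  have "finite I" using I finite_subset by blast
  then show ?thesis using I
  proof (induction I rule: finite_linorder_min_induct)
    case empty
    have "dx {} = unit_form" by (simp add: dx_def unit_form_def fun_eq_iff)
    then show ?case by (metis expand_dx[of "{}" e] empty_subsetI elem_form_empty)
  next
    case (insert k K)
    then obtain d where "dx K = expand e d" by auto
    then have "dx (insert k K) = expand e (wedge (\<lambda>I. \<Sum>j<6. N j k * dx {j} I) d)"
      using insert singleton[of k] wedge_dx_insert_min[of K k] by (simp add: expand_wedge[OF e1])
    then show ?case by blast
  qed
qed

lemma expand_surj:
  assumes b: "is_dual_basis e" and x: "\<forall>S. \<not> S \<subseteq> {..<6} \<longrightarrow> x S = 0"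
  shows "\<exists>c. (\<forall>S. \<not> S \<subseteq> {..<6} \<longrightarrow> c S = 0) \<and> x = expand e c"
proof -
  obtain C where C: "\<And>J. J \<subseteq> {..<6} \<Longrightarrow> dx J = expand e (C J)"
    using dx_in_range_expand[OF b] by metis
  define c where "c = (\<lambda>I. if I \<subseteq> {..<6} then \<Sum>J\<in>Pow {..<6}. x J * C J I else 0)"
  have "expand e c S = x S" for S
  proof -
    have "expand e c = expand e (\<lambda>I. \<Sum>J\<in>Pow {..<6}. x J * C J I)"
      unfolding expand_def c_def by (intro ext sum.cong) auto
    then have "expand e c S = (\<Sum>J\<in>Pow {..<6}. x J * expand e (C J) S)"
      using expand_smult[unfolded form_smult_def] by (simp add: expand_sum fun_eq_iff)
    also have "\<dots> = (\<Sum>J\<in>Pow {..<6}. if J = S then x J else 0)"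
    proof (intro sum.cong refl)
      fix J :: "nat set" assume "J \<in> Pow {..<6}"
      then have "expand e (C J) S = dx J S" using C[of J] by simp
      then show "x J * expand e (C J) S = (if J = S then x J else 0)" by (simp add: dx_def)
    qed
    also have "\<dots> = x S"
      using x by auto
    finally show ?thesis .
  qed
  then have "x = expand e c" by auto
  moreover have "\<forall>S. \<not> S \<subseteq> {..<6} \<longrightarrow> c S = 0" by (simp add: c_def)
  ultimately show ?thesis by blast
qed

lemma elem_form_eq_0:
  assumes "\<forall>i<6. is_k_form 1 (e i)" "I \<subseteq> {..<6}" "card I \<noteq> card S"
  shows "elem_form e I S = 0"
  using is_k_form_eq_0[OF is_k_form_elem_form[OF assms(1,2)], of S] assms(3) by auto

lemma elem_form_top_nonzero:
  assumes b: "is_dual_basis e"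
  shows "elem_form e {..<6} {..<6} \<noteq> 0"
proof
  assume top0: "elem_form e {..<6} {..<6} = 0"
  have e1: "\<forall>i<6. is_k_form 1 (e i)" using b by (rule is_dual_basis_one_forms)
  obtain c where c: "dx {..<6} = expand e c" using dx_in_range_expand[OF b] by blast
  have "1 = expand e c {..<6}" using c by (metis dx_def)
  also have "\<dots> = (\<Sum>I\<in>Pow {..<6}. c I * elem_form e I {..<6})" by (simp add: expand_def)
  also have "\<dots> = 0"
  proof (intro sum.neutral ballI)
    fix I assume I: "I \<in> Pow {..<6::nat}"
    show "c I * elem_form e I {..<6} = 0"
    proof (cases "I = {..<6}")
      case False
      then have "card I \<noteq> card {..<6::nat}" using I by (metis PowD card_subset_eq finite_lessThan)
      then show ?thesis using elem_form_eq_0[OF e1] I by simp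
    qed (simp add: top0)
  qed
  finally show False by simp
qed

text \<open>Wedging with the complementary basis form isolates the coefficient of \<open>e\<^sup>K\<close> in the top degree.\<close>
lemma expand_eq_0_imp:
  assumes b: "is_dual_basis e" and f: "\<forall>S. \<not> S \<subseteq> {..<6} \<longrightarrow> f S = 0" and z: "expand e f = (\<lambda>_. 0)"
  shows "f K = 0"
proof (cases "K \<subseteq> {..<6}")
  case False
  then show ?thesis using f by auto
next
  case True
  let ?U = "{..<6::nat}"
  let ?Kc = "?U - K"
  have e1: "\<forall>i<6. is_k_form 1 (e i)" using b by (rule is_dual_basis_one_forms)
  have "0 = wedge (expand e f) (elem_form e ?Kc) ?U"
    by (simp add: z)
  also have "\<dots> = (\<Sum>I\<in>Pow ?U. f I * wedge (elem_form e I) (elem_form e ?Kc) ?U)"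
    unfolding expand_def by (simp add: wedge_sum_left wedge_smult_left[unfolded form_smult_def])
  also have "\<dots> = (\<Sum>I\<in>Pow ?U. if I = K then f K * ((-1) ^ inv_count K ?Kc * elem_form e ?U ?U) else 0)"
  proof (rule sum.cong[OF refl])
    fix I assume I: "I \<in> Pow ?U"
    show "f I * wedge (elem_form e I) (elem_form e ?Kc) ?U
        = (if I = K then f K * ((-1) ^ inv_count K ?Kc * elem_form e ?U ?U) else 0)"
    proof (cases "I \<inter> ?Kc = {}")
      case True
      then have "I \<subseteq> K" using I by auto
      moreover have "card (I \<union> ?Kc) \<noteq> card ?U" if "I \<noteq> K"
      proof -
        have "I \<union> ?Kc \<noteq> ?U" "I \<union> ?Kc \<subseteq> ?U" using that \<open>I \<subseteq> K\<close> \<open>K \<subseteq> ?U\<close> I by auto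
        then show ?thesis by (metis card_subset_eq finite_lessThan)
      qed
      moreover have "K \<union> ?Kc = ?U" using \<open>K \<subseteq> ?U\<close> by auto
      ultimately show ?thesis
        using True I elem_form_eq_0[OF e1, of "I \<union> ?Kc" ?U]
        by (auto simp: wedge_elem_form[OF e1] form_smult_def)
    qed (use I \<open>K \<subseteq> ?U\<close> in \<open>auto simp: wedge_elem_form[OF e1]\<close>)
  qed
  also have "\<dots> = f K * ((-1) ^ inv_count K ?Kc * elem_form e ?U ?U)"
    using True by simp
  finally show ?thesis
    using elem_form_top_nonzero[OF b] by simp
qed

lemma coords_eqI:
  assumes b: "is_dual_basis e" and c: "\<forall>S. \<not> S \<subseteq> {..<6} \<longrightarrow> c S = 0" and x: "x = expand e c"
  shows "coords e x = c"
  unfolding coords_def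
proof (rule the_equality)
  fix c' assume c': "(\<forall>S. \<not> S \<subseteq> {..<6} \<longrightarrow> c' S = 0) \<and> expand e c' = x"
  have "expand e (\<lambda>S. c' S - c S) = (\<lambda>_. 0)"
    using c' x by (auto simp: expand_def sum_subtractf algebra_simps fun_eq_iff)
  then have "c' K - c K = 0" for K
    using expand_eq_0_imp[OF b, of "\<lambda>S. c' S - c S"] c' c by auto
  then show "c' = c"
    by auto
qed (use c x in simp)

lemma is_k_form_coords:
  assumes b: "is_dual_basis e" and x: "is_k_form k x"
  shows "is_k_form k (coords e x)" and "expand e (coords e x) = x"
proof -
  have e1: "\<forall>i<6. is_k_form 1 (e i)" using b by (rule is_dual_basis_one_forms)
  obtain c where c: "\<forall>S. \<not> S \<subseteq> {..<6} \<longrightarrow> c S = 0" and xc: "x = expand e c"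
    using expand_surj[OF b] x unfolding is_k_form_def by metis
  define c\<^sub>k where "c\<^sub>k = (\<lambda>I. if card I = k then c I else 0)"
  have "expand e c S = expand e c\<^sub>k S" for S
  proof (cases "card S = k")
    case True
    then show ?thesis
      unfolding expand_def c\<^sub>k_def by (intro sum.cong) (auto simp: elem_form_eq_0[OF e1])
  next
    case False
    then have "x S = 0" using x is_k_form_eq_0 by blast
    moreover have "expand e c\<^sub>k S = 0"
      unfolding expand_def c\<^sub>k_def using False by (intro sum.neutral) (auto simp: elem_form_eq_0[OF e1])
    ultimately show ?thesis using xc by simp
  qed
  then have "x = expand e c\<^sub>k" using xc by auto
  moreover have "\<forall>S. \<not> S \<subseteq> {..<6} \<longrightarrow> c\<^sub>k S = 0" using c by (simp add: c\<^sub>k_def)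
  ultimately have "coords e x = c\<^sub>k" by (intro coords_eqI[OF b])
  then show "is_k_form k (coords e x)" "expand e (coords e x) = x"
    using c \<open>x = expand e c\<^sub>k\<close> by (auto simp: is_k_form_def c\<^sub>k_def)
qed

lemma form_norm_squared: "(form_norm e x)\<^sup>2 = (\<Sum>I\<in>Pow {..<6}. (coords e x I)\<^sup>2)"
  unfolding form_norm_def by (simp add: sum_nonneg)

section \<open>Computations in the standard coframe\<close>

lemma sum_Pow_insert:
  assumes "finite A" "x \<notin> A"
  shows "sum f (Pow (insert x A)) = sum f (Pow A) + sum (\<lambda>B. f (insert x B)) (Pow A)"
proof -
  have "Pow A \<inter> insert x ` Pow A = {}" "inj_on (insert x) (Pow A)"
    using assms by (auto simp: inj_on_def insert_ident)
  then show ?thesis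
    using assms by (simp add: Pow_insert sum.union_disjoint sum.reindex)
qed

lemma sum_Pow_empty: "sum f (Pow {}) = f {}"
  by simp

lemma lessThan_6: "{..<6::nat} = {0, 1, 2, 3, 4, 5}"
  by auto

text \<open>Evaluates sums over \<open>Pow {..<6}\<close> and inversion counts of explicit sets; plain
  \<open>simp\<close> would rewrite inside the set comprehension defining \<open>inv_count\<close> and get stuck.\<close>
lemmas finite_form_eval = sum_Pow_insert sum_Pow_empty insert_iff empty_iff insert_subset
  empty_subsetI[THEN eqTrueI] insert_Diff_if empty_Diff card_insert_if card.empty finite_insert
  finite.emptyI rel_simps if_True if_False simp_thms inv_count_eq_sum Int_insert_left Int_empty_left
  lessThan_iff sum.empty sum.insert

lemma wedge_dx_left:
  "wedge (dx J) a S = (if S \<subseteq> {..<6} \<and> J \<subseteq> S then (-1) ^ inv_count J (S - J) * a (S - J) else 0)"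
proof (cases "S \<subseteq> {..<6} \<and> J \<subseteq> S")
  case True
  then have "wedge (dx J) a S = (\<Sum>A\<in>Pow S. if A = J then (-1) ^ inv_count J (S - J) * a (S - J) else 0)"
    unfolding wedge_def dx_def by (auto intro!: sum.cong)
  then show ?thesis
    using True by (subst (asm) sum.delta) (auto simp: finite_subset)
qed (auto simp: wedge_def dx_def intro!: sum.neutral)

lemma wedge_dx_right:
  "wedge a (dx J) S = (if S \<subseteq> {..<6} \<and> J \<subseteq> S then (-1) ^ inv_count (S - J) J * a (S - J) else 0)"
proof (cases "S \<subseteq> {..<6} \<and> J \<subseteq> S")
  case True
  then have "wedge a (dx J) S = (\<Sum>A\<in>Pow S. if A = S - J then (-1) ^ inv_count (S - J) J * a (S - J) else 0)"
    unfolding wedge_def dx_def by (auto intro!: sum.cong simp: Diff_Diff_Int Int_absorb1)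
  then show ?thesis
    using True by (subst (asm) sum.delta) (auto simp: finite_subset)
qed (auto simp: wedge_def dx_def intro!: sum.neutral)

definition std_symplectic :: "real form" where
  "std_symplectic = form_add (form_add (dx {0, 1}) (dx {2, 3})) (dx {4, 5})"

lemma sum_sq_two_form:
  assumes a: "is_k_form 2 (a::real form)"
  shows "(\<Sum>S\<in>Pow {..<6}. (a S)^2) = a{0,1}^2 + a{0,2}^2 + a{0,3}^2 + a{0,4}^2 + a{0,5}^2
      + a{1,2}^2 + a{1,3}^2 + a{1,4}^2 + a{1,5}^2 + a{2,3}^2 + a{2,4}^2 + a{2,5}^2
      + a{3,4}^2 + a{3,5}^2 + a{4,5}^2"
  by (simp only: lessThan_6 finite_form_eval, simp only: is_k_form_eq_0[OF a] finite_form_eval,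
      simp add: ac_simps)

lemma sum_sq_wedge_std_symplectic:
  assumes a: "is_k_form 2 (a::real form)"
  shows "(\<Sum>S\<in>Pow {..<6}. (wedge a std_symplectic S)^2)
       = (a{0,1} + a{2,3})^2 + (a{0,1} + a{4,5})^2 + (a{2,3} + a{4,5})^2 + a{0,2}^2 + a{0,3}^2
       + a{0,4}^2 + a{0,5}^2 + a{1,2}^2 + a{1,3}^2 + a{1,4}^2 + a{1,5}^2 + a{2,4}^2 + a{2,5}^2
       + a{3,4}^2 + a{3,5}^2"
  by (simp only: std_symplectic_def wedge_add_right,
      simp only: lessThan_6 form_add_def wedge_dx_right, simp only: finite_form_eval,
      simp only: is_k_form_eq_0[OF a] finite_form_eval, simp add: ac_simps)

lemma sum_sq_std_symplectic_sq_wedge: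
  assumes a: "is_k_form 2 (a::real form)"
  shows "(\<Sum>S\<in>Pow {..<6}. (form_smult (1/2) (wedge (wedge std_symplectic std_symplectic) a) S)^2)
       = (a{0,1} + a{2,3} + a{4,5})^2"
  by (simp only: std_symplectic_def wedge_assoc, simp only: wedge_add_left wedge_add_right,
      simp only: lessThan_6 form_add_def wedge_dx_left form_smult_def, simp only: finite_form_eval,
      simp only: is_k_form_eq_0[OF a] finite_form_eval, simp add: algebra_simps power2_eq_square)

lemma sum_sq_six_form:
  assumes "is_k_form 6 (a::real form)"
  shows "(\<Sum>S\<in>Pow {..<6}. (a S)^2) = (a {..<6})^2"
proof -
  have "a S = 0" if "S \<in> Pow {..<6}" "S \<noteq> {..<6}" for S
    using that is_k_form_eq_0[OF assms] by (metis PowD card_lessThan card_subset_eq finite_lessThan)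
  then show ?thesis
    by (subst sum.remove[of _ "{..<6}"]) (auto intro!: sum.neutral)
qed

lemma wedge_four_two_top:
  assumes a: "is_k_form 2 a" and b: "is_k_form 4 b"
  shows "wedge b a {..<6} = b{2,3,4,5}*a{0,1} + b{1,2,4,5}*a{0,3} + b{1,2,3,4}*a{0,5} - b{1,2,3,5}*a{0,4}
    - b{1,3,4,5}*a{0,2} + b{0,3,4,5}*a{1,2} + b{0,2,3,5}*a{1,4} - b{0,2,3,4}*a{1,5} - b{0,2,4,5}*a{1,3}
    + b{0,1,4,5}*a{2,3} + b{0,1,3,4}*a{2,5} - b{0,1,3,5}*a{2,4} + b{0,1,2,5}*a{3,4} - b{0,1,2,4}*a{3,5}
    + b{0,1,2,3}*a{4,5}"
  by (simp only: lessThan_6 wedge_def, simp only: finite_form_eval,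
      simp only: is_k_form_eq_0[OF a] is_k_form_eq_0[OF b] finite_form_eval, simp add: algebra_simps)

text \<open>The Pfaffian of a skew-symmetric \<open>6 \<times> 6\<close> matrix with upper triangular entries \<open>x\<^sub>i\<^sub>j\<close>,
  expanded along the first row into \<open>4 \<times> 4\<close> Pfaffians.\<close>
definition pfaffian6 :: "real \<Rightarrow> real \<Rightarrow> real \<Rightarrow> real \<Rightarrow> real \<Rightarrow> real \<Rightarrow> real \<Rightarrow> real \<Rightarrow> real \<Rightarrow> real
    \<Rightarrow> real \<Rightarrow> real \<Rightarrow> real \<Rightarrow> real \<Rightarrow> real \<Rightarrow> real" where
  "pfaffian6 x01 x02 x03 x04 x05 x12 x13 x14 x15 x23 x24 x25 x34 x35 x45 =
     x01 * (x23*x45 - x24*x35 + x25*x34) - x02 * (x13*x45 - x14*x35 + x15*x34)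
   + x03 * (x12*x45 - x14*x25 + x15*x24) - x04 * (x12*x35 - x13*x25 + x15*x23)
   + x05 * (x12*x34 - x13*x24 + x14*x23)"

lemma wedge_cube_top:
  assumes a: "is_k_form 2 a"
  shows "wedge (wedge a a) a {..<6} = 6 * pfaffian6 (a{0,1}) (a{0,2}) (a{0,3}) (a{0,4}) (a{0,5})
    (a{1,2}) (a{1,3}) (a{1,4}) (a{1,5}) (a{2,3}) (a{2,4}) (a{2,5}) (a{3,4}) (a{3,5}) (a{4,5})"
  by (subst wedge_four_two_top[OF a is_k_form_wedge[OF a a, simplified]],
      simp only: wedge_def lessThan_6, simp only: finite_form_eval,
      simp only: is_k_form_eq_0[OF a] finite_form_eval, simp add: pfaffian6_def algebra_simps)

lemma sum_sq_le_3: "(x + y + z)^2 \<le> 3 * (x^2 + y^2 + z^2)" for x y z :: real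
proof -
  have "3 * (x^2 + y^2 + z^2) - (x + y + z)^2 = (x - y)^2 + (y - z)^2 + (x - z)^2"
    by (simp add: algebra_simps power2_eq_square)
  then show ?thesis
    by (metis add_nonneg_nonneg diff_ge_0_iff_ge zero_le_power2)
qed

lemma cauchy_schwarz5:
  "(a1*b1 + a2*b2 + a3*b3 + a4*b4 + a5*b5)^2
     \<le> (a1^2 + a2^2 + a3^2 + a4^2 + a5^2) * (b1^2 + b2^2 + b3^2 + b4^2 + b5^2)"
  for a1 a2 a3 a4 a5 b1 b2 b3 b4 b5 :: real
proof -
  have "(a1^2 + a2^2 + a3^2 + a4^2 + a5^2) * (b1^2 + b2^2 + b3^2 + b4^2 + b5^2)
      - (a1*b1 + a2*b2 + a3*b3 + a4*b4 + a5*b5)^2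
    = (a1*b2-a2*b1)^2 + (a1*b3-a3*b1)^2 + (a1*b4-a4*b1)^2 + (a1*b5-a5*b1)^2 + (a2*b3-a3*b2)^2
    + (a2*b4-a4*b2)^2 + (a2*b5-a5*b2)^2 + (a3*b4-a4*b3)^2 + (a3*b5-a5*b3)^2 + (a4*b5-a5*b4)^2"
    by (simp add: algebra_simps power2_eq_square)
  moreover have "0 \<le> (a1*b2-a2*b1)^2 + (a1*b3-a3*b1)^2 + (a1*b4-a4*b1)^2 + (a1*b5-a5*b1)^2
    + (a2*b3-a3*b2)^2 + (a2*b4-a4*b2)^2 + (a2*b5-a5*b2)^2 + (a3*b4-a4*b3)^2 + (a3*b5-a5*b3)^2
    + (a4*b5-a5*b4)^2"
    by (intro add_nonneg_nonneg zero_le_power2)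
  ultimately show ?thesis by linarith
qed

lemma pfaffian4_bound: "2 * \<bar>u*v - w*z + p*q\<bar> \<le> u^2 + v^2 + w^2 + z^2 + p^2 + q^2" for u v w z p q :: real
proof -
  have "u^2 + v^2 + w^2 + z^2 + p^2 + q^2 - 2 * (u*v - w*z + p*q) = (u - v)^2 + (w + z)^2 + (p - q)^2"
    "u^2 + v^2 + w^2 + z^2 + p^2 + q^2 + 2 * (u*v - w*z + p*q) = (u + v)^2 + (w - z)^2 + (p + q)^2"
    by (simp_all add: algebra_simps power2_eq_square)
  moreover have "0 \<le> (u - v)^2 + (w + z)^2 + (p - q)^2" "0 \<le> (u + v)^2 + (w - z)^2 + (p + q)^2"
    by (intro add_nonneg_nonneg zero_le_power2)+
  ultimately have "\<bar>2 * (u*v - w*z + p*q)\<bar> \<le> u^2 + v^2 + w^2 + z^2 + p^2 + q^2"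
    unfolding abs_le_iff by linarith
  then show ?thesis
    by (simp only: abs_mult abs_numeral)
qed

lemma amgm_cubic: "0 \<le> A \<Longrightarrow> 0 \<le> M \<Longrightarrow> 27 * A * M^2 \<le> 4 * (A + M)^3" for A M :: real
proof -
  assume "0 \<le> A" "0 \<le> M"
  then have "0 \<le> (M - 2*A)^2 * (4*M + A)" by simp
  moreover have "4 * (A + M)^3 - 27 * A * M^2 = (M - 2*A)^2 * (4*M + A)"
    by (simp add: algebra_simps power2_eq_square power3_eq_cube)
  ultimately show ?thesis by linarith
qed

text \<open>Expanding along the first row, Cauchy--Schwarz, the bound \<open>|P\<^sub>k| \<le> S\<^sub>k/2\<close> for the
  \<open>4 \<times> 4\<close> Pfaffians \<open>P\<^sub>k\<close> (where the \<open>S\<^sub>k\<close> sum to three times the weight \<open>M\<close> of the lower block)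
  and AM-GM give \<open>36 Pf\<^sup>2 \<le> 27 A M\<^sup>2 \<le> 4 (A + M)\<^sup>3\<close>.\<close>
lemma pfaffian6_bound:
  "36 * (pfaffian6 x01 x02 x03 x04 x05 x12 x13 x14 x15 x23 x24 x25 x34 x35 x45)^2
   \<le> 4 * (x01^2 + x02^2 + x03^2 + x04^2 + x05^2 + x12^2 + x13^2 + x14^2 + x15^2 + x23^2 + x24^2
          + x25^2 + x34^2 + x35^2 + x45^2)^3"
proof -
  define P1 where "P1 = x23*x45 - x24*x35 + x25*x34"
  define P2 where "P2 = x13*x45 - x14*x35 + x15*x34"
  define P3 where "P3 = x12*x45 - x14*x25 + x15*x24"
  define P4 where "P4 = x12*x35 - x13*x25 + x15*x23"
  define P5 where "P5 = x12*x34 - x13*x24 + x14*x23"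
  define S1 where "S1 = x23^2 + x45^2 + x24^2 + x35^2 + x25^2 + x34^2"
  define S2 where "S2 = x13^2 + x45^2 + x14^2 + x35^2 + x15^2 + x34^2"
  define S3 where "S3 = x12^2 + x45^2 + x14^2 + x25^2 + x15^2 + x24^2"
  define S4 where "S4 = x12^2 + x35^2 + x13^2 + x25^2 + x15^2 + x23^2"
  define S5 where "S5 = x12^2 + x34^2 + x13^2 + x24^2 + x14^2 + x23^2"
  define A where "A = x01^2 + x02^2 + x03^2 + x04^2 + x05^2"
  define M where "M = x12^2 + x13^2 + x14^2 + x15^2 + x23^2 + x24^2 + x25^2 + x34^2 + x35^2 + x45^2"
  let ?Pf = "pfaffian6 x01 x02 x03 x04 x05 x12 x13 x14 x15 x23 x24 x25 x34 x35 x45"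
  have A0: "0 \<le> A" and M0: "0 \<le> M"
    unfolding A_def M_def by (intro add_nonneg_nonneg zero_le_power2)+
  have "?Pf = x01*P1 + (-x02)*P2 + x03*P3 + (-x04)*P4 + x05*P5"
    unfolding pfaffian6_def P1_def P2_def P3_def P4_def P5_def by simp
  then have Pf_le: "?Pf^2 \<le> A * (P1^2 + P2^2 + P3^2 + P4^2 + P5^2)"
    using cauchy_schwarz5[of x01 P1 "-x02" P2 x03 P3 "-x04" P4 x05 P5] unfolding A_def by simp
  have sq_le: "P^2 \<le> M * S / 4" if "2 * \<bar>P\<bar> \<le> S" "S \<le> M" for P S :: real
  proof -
    have "(2 * \<bar>P\<bar>)^2 \<le> S^2" using that(1) by (intro power_mono) auto
    also have "S^2 \<le> M * S" using that by (simp add: power2_eq_square mult_right_mono)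
    finally show ?thesis by simp
  qed
  have "P1^2 + P2^2 + P3^2 + P4^2 + P5^2 \<le> M * S1 / 4 + M * S2 / 4 + M * S3 / 4 + M * S4 / 4 + M * S5 / 4"
    unfolding P1_def P2_def P3_def P4_def P5_def
    by (intro add_mono sq_le pfaffian4_bound[THEN order_trans])
      (simp_all add: S1_def S2_def S3_def S4_def S5_def M_def add_increasing add_increasing2)
  also have "\<dots> = M * (S1 + S2 + S3 + S4 + S5) / 4"
    by (simp add: distrib_left add_divide_distrib)
  also have "S1 + S2 + S3 + S4 + S5 = 3 * M"
    by (simp add: S1_def S2_def S3_def S4_def S5_def M_def)
  also have "M * (3 * M) / 4 = 3 * M^2 / 4"
    by (simp add: power2_eq_square)
  finally have "A * (P1^2 + P2^2 + P3^2 + P4^2 + P5^2) \<le> A * (3 * M^2 / 4)"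
    using A0 by (rule mult_left_mono)
  then have "36 * ?Pf^2 \<le> 27 * A * M^2"
    using Pf_le by linarith
  also have "\<dots> \<le> 4 * (A + M)^3"
    by (rule amgm_cubic[OF A0 M0])
  finally show ?thesis
    by (simp add: A_def M_def add.assoc)
qed

lemma std_norm_identity:
  assumes a: "is_k_form 2 (a::real form)"
  shows "(\<Sum>S\<in>Pow {..<6}. (a S)^2)
       + (\<Sum>S\<in>Pow {..<6}. (form_smult (1/2) (wedge (wedge std_symplectic std_symplectic) a) S)^2)
       = (\<Sum>S\<in>Pow {..<6}. (wedge a std_symplectic S)^2)"
  unfolding sum_sq_two_form[OF a] sum_sq_wedge_std_symplectic[OF a] sum_sq_std_symplectic_sq_wedge[OF a]
  by (simp add: algebra_simps power2_eq_square)

lemma std_norm_wedge_symplectic_le: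
  assumes a: "is_k_form 2 (a::real form)"
  shows "(\<Sum>S\<in>Pow {..<6}. (wedge a std_symplectic S)^2) \<le> 4 * (\<Sum>S\<in>Pow {..<6}. (a S)^2)"
proof -
  have "(a{0,1} + a{2,3} + a{4,5})^2 \<le> 3 * (a{0,1}^2 + a{2,3}^2 + a{4,5}^2)"
    by (rule sum_sq_le_3)
  also have "a{0,1}^2 + a{2,3}^2 + a{4,5}^2 \<le> (\<Sum>S\<in>Pow {..<6}. (a S)^2)"
    unfolding sum_sq_two_form[OF a] by (simp add: add_increasing add_increasing2)
  finally show ?thesis
    using std_norm_identity[OF a] sum_sq_std_symplectic_sq_wedge[OF a] by linarith
qed

lemma std_norm_cube_le:
  assumes a: "is_k_form 2 (a::real form)"
  shows "(\<Sum>S\<in>Pow {..<6}. (wedge (wedge a a) a S)^2) \<le> 6 * (\<Sum>S\<in>Pow {..<6}. (a S)^2)^3"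
proof -
  have "is_k_form 6 (wedge (wedge a a) a)"
    using is_k_form_wedge[OF is_k_form_wedge[OF a a] a] by simp
  then have "(\<Sum>S\<in>Pow {..<6}. (wedge (wedge a a) a S)^2) = 36 * (pfaffian6 (a{0,1}) (a{0,2}) (a{0,3})
      (a{0,4}) (a{0,5}) (a{1,2}) (a{1,3}) (a{1,4}) (a{1,5}) (a{2,3}) (a{2,4}) (a{2,5}) (a{3,4}) (a{3,5})
      (a{4,5}))^2"
    by (simp add: sum_sq_six_form wedge_cube_top[OF a] power_mult_distrib)
  also have "\<dots> \<le> 4 * (\<Sum>S\<in>Pow {..<6}. (a S)^2)^3"
    unfolding sum_sq_two_form[OF a] by (rule pfaffian6_bound)
  also have "\<dots> \<le> 6 * (\<Sum>S\<in>Pow {..<6}. (a S)^2)^3"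
    by (simp add: sum_nonneg)
  finally show ?thesis .
qed

theorem lemma4p1:
  fixes \<omega> \<rho> \<alpha> :: "real form" and e :: "nat \<Rightarrow> real form"
  assumes "su3_adapted e \<omega> \<rho>"
    and "is_k_form 2 \<alpha>"
  shows "(form_norm e \<alpha>)^2 + (form_norm e (form_smult (1/2) (wedge (wedge \<omega> \<omega>) \<alpha>)))^2
           = (form_norm e (wedge \<alpha> \<omega>))^2
       \<and> (form_norm e (wedge \<alpha> \<omega>))^2 \<le> 4 * (form_norm e \<alpha>)^2
       \<and> (form_norm e (wedge (wedge \<alpha> \<alpha>) \<alpha>))^2 \<le> 6 * (form_norm e \<alpha>)^6"
proof -
  have b: "is_dual_basis e"
    and \<omega>: "\<omega> = form_add (form_add (wedge (e 0) (e 1)) (wedge (e 2) (e 3))) (wedge (e 4) (e 5))"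
    using assms(1) unfolding su3_adapted_def by auto
  have e1: "\<forall>i<6. is_k_form 1 (e i)" using b by (rule is_dual_basis_one_forms)
  define a where "a = coords e \<alpha>"
  have a: "is_k_form 2 a" and \<alpha>_eq: "\<alpha> = expand e a"
    using is_k_form_coords[OF b assms(2)] unfolding a_def by auto
  have \<omega>_eq: "\<omega> = expand e std_symplectic"
    by (simp add: \<omega> std_symplectic_def expand_add expand_dx elem_form_pair[OF e1])
  have supp: "\<forall>S. \<not> S \<subseteq> {..<6} \<longrightarrow> form_smult r (wedge x y) S = 0" for r and x y :: "real form"
    by (simp add: wedge_def form_smult_def)
  have "coords e (wedge \<alpha> \<omega>) = wedge a std_symplectic"
    by (rule coords_eqI[OF b supp[of 1, simplified]]) (simp add: \<alpha>_eq \<omega>_eq expand_wedge[OF e1])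
  moreover have "coords e (form_smult (1/2) (wedge (wedge \<omega> \<omega>) \<alpha>))
      = form_smult (1/2) (wedge (wedge std_symplectic std_symplectic) a)"
    by (rule coords_eqI[OF b supp]) (simp add: \<alpha>_eq \<omega>_eq expand_wedge[OF e1] expand_smult)
  moreover have "coords e (wedge (wedge \<alpha> \<alpha>) \<alpha>) = wedge (wedge a a) a"
    by (rule coords_eqI[OF b supp[of 1, simplified]]) (simp add: \<alpha>_eq expand_wedge[OF e1])
  moreover have "(form_norm e \<alpha>)^6 = ((form_norm e \<alpha>)^2)^3"
    by (simp flip: power_mult)
  ultimately show ?thesis
    using std_norm_identity[OF a] std_norm_wedge_symplectic_le[OF a] std_norm_cube_le[OF a]
    by (simp add: form_norm_squared a_def)
qed

end
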